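(* Let $\Bbbk$ be a field of characteristic zero and $h,c\in\Bbbk$. Regarded as a module over the subalgebra $\mathcal O=\mathrm{span}\{L_n-L_{-n}\mid n\geq 1\}$ of the Virasoro algebra, the Verma module $V(h,c)$ is a free $U(\mathcal O)$-module of rank $1$; that is, $V(h,c)\cong U(\mathcal O)$ as $\mathcal O$-modules.
   Context: The Virasoro algebra $\mathrm{Vir}$ over $\Bbbk$ has basis $\{L_n\mid n\in\mathbb{Z}\}\cup\{C\}$ with $C$ central and $[L_n,L_m]=(n-m)L_{n+m}+\frac1{12}n(n^2-1)\delta_{m,-n}C$. Let $\mathrm{Vir}_+=\mathrm{span}\{L_n\mid n>0\}$, $\mathrm{Vir}_0=\Bbbk L_0\oplus\Bbbk C$. The Verma module is $V(h,c)=\mathrm{Ind}_{\mathrm{Vir}_0\oplus\mathrm{Vir}_+}^{\mathrm{Vir}}\Bbbk|h,c\rangle$, where $L_0$ acts on $|h,c\rangle$ by $h$, $C$ by $c$, and $\mathrm{Vir}_+$ by $0$. *)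

theory Defs
  imports "HOL-Library.Poly_Mapping"
begin

text \<open>For a Lie algebra
with basis indexed by 'a, its tensor algebra T is the type of finitely supported maps from words to k: a word
[a1,...,an] stands for the monomial x_a1 ... x_an.\<close>

definition smult :: "'k::semiring_0 \<Rightarrow> ('a \<Rightarrow>\<^sub>0 'k) \<Rightarrow> ('a \<Rightarrow>\<^sub>0 'k)" where
  "smult a p = Poly_Mapping.map (\<lambda>x. a * x) p"

inductive_set lspan :: "('a \<Rightarrow>\<^sub>0 'k::semiring_0) set \<Rightarrow> ('a \<Rightarrow>\<^sub>0 'k) set"
  for S where
  lspan_zero: "0 \<in> lspan S"
| lspan_step: "x \<in> S \<Longrightarrow> y \<in> lspan S \<Longrightarrow> smult a x + y \<in> lspan S"

definition tmul :: "('a list \<Rightarrow>\<^sub>0 'k::semiring_0) \<Rightarrow> ('a list \<Rightarrow>\<^sub>0 'k) \<Rightarrow> ('a list \<Rightarrow>\<^sub>0 'k)" where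
  "tmul p q = (\<Sum>x\<in>Poly_Mapping.keys p. \<Sum>y\<in>Poly_Mapping.keys q. Poly_Mapping.single (x @ y) (Poly_Mapping.lookup p x * Poly_Mapping.lookup q y))"

definition deg1 :: "('a \<Rightarrow>\<^sub>0 'k::semiring_0) \<Rightarrow> ('a list \<Rightarrow>\<^sub>0 'k)" where
  "deg1 v = (\<Sum>x\<in>Poly_Mapping.keys v. Poly_Mapping.single [x] (Poly_Mapping.lookup v x))"

definition lie_rel :: "('a \<Rightarrow> 'a \<Rightarrow> ('a \<Rightarrow>\<^sub>0 'k::comm_ring_1)) \<Rightarrow> 'a \<Rightarrow> 'a \<Rightarrow> ('a list \<Rightarrow>\<^sub>0 'k)" where
  "lie_rel br a b = Poly_Mapping.single [a, b] 1 - Poly_Mapping.single [b, a] 1 - deg1 (br a b)"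

text \<open>Generators of the two-sided ideal I with U(g) = T(g)/I.\<close>
definition lie_ideal_gens :: "('a \<Rightarrow> 'a \<Rightarrow> ('a \<Rightarrow>\<^sub>0 'k::comm_ring_1)) \<Rightarrow> ('a list \<Rightarrow>\<^sub>0 'k) set" where
  "lie_ideal_gens br = {tmul (tmul u (lie_rel br a b)) w | u w a b. True}"

definition env_ideal :: "('a \<Rightarrow> 'a \<Rightarrow> ('a \<Rightarrow>\<^sub>0 'k::comm_ring_1)) \<Rightarrow> ('a list \<Rightarrow>\<^sub>0 'k) set" where
  "env_ideal br = lspan (lie_ideal_gens br)"

datatype vir_basis = L int | C

fun vir_br :: "vir_basis \<Rightarrow> vir_basis \<Rightarrow> (vir_basis \<Rightarrow>\<^sub>0 'k::field_char_0)" where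
  "vir_br (L n) (L m) =
     smult (of_int (n - m)) (Poly_Mapping.single (L (n + m)) 1)
     + (if m = - n then Poly_Mapping.single C (of_int (n * (n^2 - 1)) / 12) else 0)"
| "vir_br _ _ = 0"

text \<open>Verma module V(h,c) = U(Vir) \<otimes>_{U(Vir_0 + Vir_+)} k = U(Vir)/U(Vir){L_n (n>0), L_0 - h, C - c}.
  Its preimage in T(Vir) is the left ideal below (I_Vir + T \<cdot> generators); so
  V(h,c) = T(Vir) / verma_ideal h c, with Vir acting by left multiplication.\<close>
definition verma_ideal :: "'k::field_char_0 \<Rightarrow> 'k \<Rightarrow> (vir_basis list \<Rightarrow>\<^sub>0 'k) set" where
  "verma_ideal h c = lspan (lie_ideal_gens vir_br
     \<union> {tmul u (Poly_Mapping.single [L n] 1) | u n. n > 0}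
     \<union> {tmul u (Poly_Mapping.single [L 0] 1 - Poly_Mapping.single [] h) | u. True}
     \<union> {tmul u (Poly_Mapping.single [C] 1 - Poly_Mapping.single [] c) | u. True})"

text \<open>Basis index i :: nat stands for O_{i+1} = L_{i+1} - L_{-(i+1)}.\<close>
definition o_vec :: "nat \<Rightarrow> (vir_basis \<Rightarrow>\<^sub>0 'k::field_char_0)" where
  "o_vec i = Poly_Mapping.single (L (int i + 1)) 1 - Poly_Mapping.single (L (- (int i + 1))) 1"

text \<open>Structure constants of O in the basis O_n:
  [O_n, O_m] = (n - m) O_{n+m} - (n + m) sgn(n - m) O_{|n-m|}
  (central terms cancel).\<close>
definition o_br :: "nat \<Rightarrow> nat \<Rightarrow> (nat \<Rightarrow>\<^sub>0 'k::field_char_0)" where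
  "o_br i j =
     smult (of_int (int i - int j)) (Poly_Mapping.single (i + j + 1) 1)
     + (if j < i then smult (- of_int (int i + int j + 2)) (Poly_Mapping.single (i - j - 1) 1)
        else if i < j then smult (of_int (int i + int j + 2)) (Poly_Mapping.single (j - i - 1) 1)
        else 0)"

end

theory Submission
  imports Defs HOL.Modules
begin

text \<open>
  The Verma module is generated over U(O) by its highest weight vector: for n > 0 one has
  L_{-n} = L_n - O_{n-1}, and the L_n with n \<ge> 0 and C can be commuted to the right through
  monomials in the O_i, where they act by scalars. Hence the map o_incl : T(O) \<rightarrow> T(Vir)
  induced by O \<subseteq> Vir is onto modulo the Verma ideal. For injectivity the same commutation
  recipe is used to let Vir act on T(O) itself: O_i by left multiplication, elements of
  B = Vir_0 \<oplus> Vir_+ by commuting them through words. By the Jacobi identity this action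
  respects the Lie relations and preserves the ideal defining U(O), modulo that ideal. Its
  orbit map v \<mapsto> v \<cdot> 1 on T(Vir) then kills the Verma ideal and is a left inverse of o_incl.
\<close>

section \<open>Finitely supported functions as modules\<close>

lemma lookup_smult [simp]: "Poly_Mapping.lookup (smult a p) x = a * Poly_Mapping.lookup p x"
  by (simp add: smult_def map.rep_eq when_def)

interpretation smult: module "smult :: 'k::comm_ring_1 \<Rightarrow> ('a \<Rightarrow>\<^sub>0 'k) \<Rightarrow> ('a \<Rightarrow>\<^sub>0 'k)"
  by standard (auto intro!: poly_mapping_eqI simp: lookup_add algebra_simps)

interpretation smult: module_pair
  "smult :: 'k::comm_ring_1 \<Rightarrow> ('a \<Rightarrow>\<^sub>0 'k) \<Rightarrow> ('a \<Rightarrow>\<^sub>0 'k)"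
  "smult :: 'k::comm_ring_1 \<Rightarrow> ('b \<Rightarrow>\<^sub>0 'k) \<Rightarrow> ('b \<Rightarrow>\<^sub>0 'k)" ..

lemma smult_single: "smult a (Poly_Mapping.single x b) = Poly_Mapping.single x (a * b)"
  by (rule poly_mapping_eqI) (simp add: lookup_single when_def)

lemma keys_smult_subset: "Poly_Mapping.keys (smult a p) \<subseteq> Poly_Mapping.keys p"
  by (auto simp: in_keys_iff)

lemma poly_mapping_sum_single:
  "(\<Sum>x\<in>Poly_Mapping.keys p. Poly_Mapping.single x (Poly_Mapping.lookup p x)) = p"
  by (rule poly_mapping_eqI) (auto simp: lookup_sum lookup_single when_def in_keys_iff)

lemma module_hom_smultI:
  assumes "\<And>x y. F (x + y) = F x + F y" and "\<And>a x. F (smult a x) = smult a (F x)"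
  shows "module_hom smult smult F"
  using assms by (simp add: module_hom_iff smult.module_axioms)

lemmas module_hom_comp = module_hom_compose[unfolded comp_def]

lemma lspan_eq_span: "lspan S = smult.span S"
proof (intro set_eqI iffI)
  fix x assume "x \<in> lspan S"
  then show "x \<in> smult.span S"
    by induction (auto intro: smult.span_add smult.span_scale smult.span_base smult.span_zero)
next
  fix x assume "x \<in> smult.span S"
  then show "x \<in> lspan S"
    by (induction rule: smult.span_induct_alt) (auto intro: lspan.intros)
qed

lemma module_hom_span_subset:
  assumes F: "module_hom smult smult F" and S: "\<And>x. x \<in> S \<Longrightarrow> F x \<in> smult.span T"
    and x: "x \<in> smult.span S"
  shows "F x \<in> smult.span T"
  using x by (induction rule: smult.span_induct_alt)
    (simp_all add: module_hom.zero[OF F] module_hom.add[OF F] module_hom.scale[OF F] S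
      smult.span_zero smult.span_add smult.span_scale)

definition lin_ext :: "('a \<Rightarrow> ('b \<Rightarrow>\<^sub>0 'k::comm_ring_1)) \<Rightarrow> ('a \<Rightarrow>\<^sub>0 'k) \<Rightarrow> ('b \<Rightarrow>\<^sub>0 'k)" where
  "lin_ext f p = (\<Sum>x\<in>Poly_Mapping.keys p. smult (Poly_Mapping.lookup p x) (f x))"

lemma lin_ext_superset:
  "finite A \<Longrightarrow> Poly_Mapping.keys p \<subseteq> A \<Longrightarrow>
   lin_ext f p = (\<Sum>x\<in>A. smult (Poly_Mapping.lookup p x) (f x))"
  unfolding lin_ext_def by (rule sum.mono_neutral_left) (auto simp: in_keys_iff)

lemma module_hom_lin_ext:
  fixes f :: "'a \<Rightarrow> ('b \<Rightarrow>\<^sub>0 'k::comm_ring_1)"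
  shows "module_hom smult smult (lin_ext f)"
proof (rule module_hom_smultI)
  fix p q :: "'a \<Rightarrow>\<^sub>0 'k"
  let ?A = "Poly_Mapping.keys p \<union> Poly_Mapping.keys q"
  have "lin_ext f (p + q) = (\<Sum>x\<in>?A. smult (Poly_Mapping.lookup (p + q) x) (f x))"
    by (rule lin_ext_superset) (auto simp: keys_add)
  also have "\<dots> = lin_ext f p + lin_ext f q"
    by (simp add: lookup_add smult.scale_left_distrib sum.distrib lin_ext_superset[symmetric])
  finally show "lin_ext f (p + q) = lin_ext f p + lin_ext f q" .
next
  fix a and p :: "'a \<Rightarrow>\<^sub>0 'k"
  have "lin_ext f (smult a p) = (\<Sum>x\<in>Poly_Mapping.keys p. smult (a * Poly_Mapping.lookup p x) (f x))"
    using lin_ext_superset[of "Poly_Mapping.keys p" "smult a p" f] by (simp add: keys_smult_subset)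
  then show "lin_ext f (smult a p) = smult a (lin_ext f p)"
    by (simp add: lin_ext_def smult.scale_sum_right)
qed

lemma lin_ext_single [simp]: "lin_ext f (Poly_Mapping.single x a) = smult a (f x)"
  by (cases "a = 0") (simp_all add: lin_ext_def)

lemma lin_ext_zero [simp]: "lin_ext f 0 = 0"
  by (simp add: lin_ext_def)

lemma lin_ext_zero_fun [simp]: "lin_ext (\<lambda>_. 0) p = 0"
  by (simp add: lin_ext_def)

lemma lin_ext_cong: "(\<And>x. x \<in> Poly_Mapping.keys p \<Longrightarrow> f x = g x) \<Longrightarrow> lin_ext f p = lin_ext g p"
  by (simp add: lin_ext_def)

lemma module_hom_eq_lin_ext:
  assumes "module_hom smult smult F"
  shows "F p = lin_ext (\<lambda>x. F (Poly_Mapping.single x 1)) p"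
proof -
  have "F p = F (\<Sum>x\<in>Poly_Mapping.keys p. smult (Poly_Mapping.lookup p x) (Poly_Mapping.single x 1))"
    by (simp add: smult_single poly_mapping_sum_single)
  then show ?thesis
    by (simp add: lin_ext_def module_hom.sum[OF assms] module_hom.scale[OF assms])
qed

lemma module_hom_eq_on_keys:
  assumes "module_hom smult smult F" "module_hom smult smult G"
    and "\<And>x. x \<in> Poly_Mapping.keys p \<Longrightarrow> F (Poly_Mapping.single x 1) = G (Poly_Mapping.single x 1)"
  shows "F p = G p"
  using assms by (simp add: module_hom_eq_lin_ext[of F p] module_hom_eq_lin_ext[of G p] cong: lin_ext_cong)

lemma lin_ext_in_span:
  "(\<And>x. x \<in> Poly_Mapping.keys p \<Longrightarrow> f x \<in> smult.span S) \<Longrightarrow> lin_ext f p \<in> smult.span S"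
  unfolding lin_ext_def by (simp add: smult.span_sum smult.span_scale)

lemma module_hom_in_span:
  "module_hom smult smult F
   \<Longrightarrow> (\<And>x. x \<in> Poly_Mapping.keys p \<Longrightarrow> F (Poly_Mapping.single x 1) \<in> smult.span S)
   \<Longrightarrow> F p \<in> smult.span S"
  by (simp add: module_hom_eq_lin_ext[of F p] lin_ext_in_span)

lemma module_hom_lin_ext_fun:
  "(\<And>x. module_hom smult smult (\<lambda>p. f p x)) \<Longrightarrow> module_hom smult smult (\<lambda>p. lin_ext (f p) q)"
  unfolding lin_ext_def by (intro smult.module_hom_sum smult.module_hom_scale) (auto simp: smult.module_axioms)

lemma keys_lin_ext: "Poly_Mapping.keys (lin_ext f p) \<subseteq> (\<Union>x\<in>Poly_Mapping.keys p. Poly_Mapping.keys (f x))"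
  unfolding lin_ext_def using keys_sum keys_smult_subset by fastforce

section \<open>Tensor algebras and enveloping ideals\<close>

(* With words a monoid under concatenation, the convolution product of Poly_Mapping is the
   product of the tensor algebra; see tmul_eq_times. *)
instantiation list :: (type) monoid_add
begin
definition zero_list_def: "(0::'a list) = []"
definition plus_list_def: "(xs::'a list) + ys = xs @ ys"
instance by standard (auto simp: zero_list_def plus_list_def)
end

lemma single_times_single:
  "Poly_Mapping.single u a * Poly_Mapping.single v b = Poly_Mapping.single (u @ v) (a * b)"
  by (simp add: mult_single plus_list_def)

lemma one_eq_single_Nil: "1 = Poly_Mapping.single [] 1"
  by (simp add: zero_list_def[symmetric])

lemma tmul_eq_times: "tmul p q = p * q"
proof -
  have "p * q = (\<Sum>x\<in>Poly_Mapping.keys p. Poly_Mapping.single x (Poly_Mapping.lookup p x)) *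
                (\<Sum>y\<in>Poly_Mapping.keys q. Poly_Mapping.single y (Poly_Mapping.lookup q y))"
    by (simp only: poly_mapping_sum_single)
  also have "\<dots> = tmul p q"
    by (simp add: tmul_def sum_distrib_left sum_distrib_right single_times_single) (rule sum.swap)
  finally show ?thesis by simp
qed

lemma smult_eq_times: "smult a p = Poly_Mapping.single [] a * p"
  unfolding smult_def using mult_map_scale_conv_mult[of a p] by (simp add: zero_list_def)

lemma single_Nil_commute: "Poly_Mapping.single [] a * p = p * Poly_Mapping.single [] (a::'k::comm_ring_1)"
proof -
  have "Poly_Mapping.single [] a * (\<Sum>x\<in>Poly_Mapping.keys p. Poly_Mapping.single x (Poly_Mapping.lookup p x))
     = (\<Sum>x\<in>Poly_Mapping.keys p. Poly_Mapping.single x (Poly_Mapping.lookup p x)) * Poly_Mapping.single [] a"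
    by (simp add: sum_distrib_left sum_distrib_right single_times_single mult.commute)
  then show ?thesis by (simp only: poly_mapping_sum_single)
qed

lemma smult_times_left: "smult a p * q = smult a (p * q :: 'a list \<Rightarrow>\<^sub>0 'k::comm_ring_1)"
  by (simp add: smult_eq_times mult.assoc)

lemma smult_times_right: "p * smult a q = smult a (p * q :: 'a list \<Rightarrow>\<^sub>0 'k::comm_ring_1)"
  by (metis mult.assoc single_Nil_commute smult_eq_times)

lemma module_hom_times_left: "module_hom smult smult (\<lambda>q. p * q :: 'a list \<Rightarrow>\<^sub>0 'k::comm_ring_1)"
  by (rule module_hom_smultI) (simp_all add: distrib_left smult_times_right)

lemma module_hom_times_right: "module_hom smult smult (\<lambda>p. p * q :: 'a list \<Rightarrow>\<^sub>0 'k::comm_ring_1)"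
  by (rule module_hom_smultI) (simp_all add: distrib_right smult_times_left)

lemma deg1_eq_lin_ext: "deg1 v = lin_ext (\<lambda>x. Poly_Mapping.single [x] 1) v"
  by (simp add: deg1_def lin_ext_def smult_single)

lemma module_hom_deg1: "module_hom smult smult deg1"
  unfolding deg1_eq_lin_ext[abs_def] by (rule module_hom_lin_ext)

lemma deg1_single [simp]: "deg1 (Poly_Mapping.single a (1::'k::comm_ring_1)) = Poly_Mapping.single [a] 1"
  by (simp add: deg1_eq_lin_ext)

lemmas deg1_linear = module_hom.add[OF module_hom_deg1] module_hom.diff[OF module_hom_deg1]
  module_hom.neg[OF module_hom_deg1] module_hom.scale[OF module_hom_deg1] module_hom.zero[OF module_hom_deg1]

lemma env_ideal_eq_span: "env_ideal br = smult.span (lie_ideal_gens br)"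
  by (simp add: env_ideal_def lspan_eq_span)

lemma env_ideal_times:
  assumes "x \<in> env_ideal br"
  shows "p * x * q \<in> env_ideal br"
proof -
  have hom: "module_hom smult smult (\<lambda>x. p * x * q)"
    by (rule module_hom_comp[OF module_hom_times_left module_hom_times_right])
  have gens: "p * g * q \<in> lie_ideal_gens br" if "g \<in> lie_ideal_gens br" for g
    using that unfolding lie_ideal_gens_def by (auto simp: tmul_eq_times) (metis mult.assoc)
  show ?thesis
    using assms unfolding env_ideal_eq_span
    by (rule module_hom_span_subset[OF hom, rotated]) (simp add: gens smult.span_base)
qed

lemma env_ideal_times_left: "x \<in> env_ideal br \<Longrightarrow> p * x \<in> env_ideal br"
  using env_ideal_times[of x br p 1] by simp

lemma lie_rel_in_env_ideal: "lie_rel br a b \<in> env_ideal br"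
proof -
  have "lie_rel br a b = tmul (tmul 1 (lie_rel br a b)) 1"
    by (simp add: tmul_eq_times)
  then show ?thesis
    unfolding env_ideal_eq_span lie_ideal_gens_def by (blast intro: smult.span_base)
qed

lemma lie_rel_eq:
  "lie_rel br a b = Poly_Mapping.single [a] 1 * Poly_Mapping.single [b] 1
     - Poly_Mapping.single [b] 1 * Poly_Mapping.single [a] 1 - deg1 (br a b)"
  by (simp add: lie_rel_def single_times_single)

definition bracket ::
    "('a \<Rightarrow> 'a \<Rightarrow> ('a \<Rightarrow>\<^sub>0 'k::comm_ring_1)) \<Rightarrow> ('a \<Rightarrow>\<^sub>0 'k) \<Rightarrow> ('a \<Rightarrow>\<^sub>0 'k) \<Rightarrow> ('a \<Rightarrow>\<^sub>0 'k)" where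
  "bracket br Z W = lin_ext (\<lambda>a. lin_ext (br a) W) Z"

lemma module_hom_bracket_left: "module_hom smult smult (\<lambda>Z. bracket br Z W)"
  unfolding bracket_def by (rule module_hom_lin_ext)

lemma module_hom_bracket_right: "module_hom smult smult (bracket br Z)"
  unfolding bracket_def[abs_def] by (rule module_hom_lin_ext_fun) (rule module_hom_lin_ext)

lemmas bracket_bilinear =
  module_hom.add[OF module_hom_bracket_left] module_hom.add[OF module_hom_bracket_right]
  module_hom.diff[OF module_hom_bracket_left] module_hom.diff[OF module_hom_bracket_right]
  module_hom.neg[OF module_hom_bracket_left] module_hom.neg[OF module_hom_bracket_right]
  module_hom.scale[OF module_hom_bracket_left] module_hom.scale[OF module_hom_bracket_right]
  module_hom.zero[OF module_hom_bracket_left] module_hom.zero[OF module_hom_bracket_right]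

lemma bracket_single [simp]: "bracket br (Poly_Mapping.single a 1) (Poly_Mapping.single b 1) = br a b"
  by (simp add: bracket_def)

lemma bracket_single_right: "bracket br Z (Poly_Mapping.single b 1) = lin_ext (\<lambda>a. br a b) Z"
  by (simp add: bracket_def)

lemma bracket_antisym:
  assumes antisym: "\<And>a b. br b a = - br a b"
  shows "bracket br W Z = - bracket br Z W"
proof (rule module_hom_eq_on_keys[where F = "bracket br W"])
  fix b
  show "bracket br W (Poly_Mapping.single b 1) = - bracket br (Poly_Mapping.single b 1) W"
  proof (rule module_hom_eq_on_keys[where F = "\<lambda>W. bracket br W (Poly_Mapping.single b 1)"])
    fix a
    show "bracket br (Poly_Mapping.single a 1) (Poly_Mapping.single b 1)
      = - bracket br (Poly_Mapping.single b 1) (Poly_Mapping.single a 1)"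
      using antisym[of a b] by simp
  qed (simp_all add: module_hom_bracket_left smult.module_hom_neg module_hom_bracket_right)
qed (simp_all add: module_hom_bracket_right smult.module_hom_neg module_hom_bracket_left)

lemma bracket_jacobi:
  assumes "\<And>a b c. bracket br (br a b) (Poly_Mapping.single c 1) + bracket br (br b c) (Poly_Mapping.single a 1)
     + bracket br (br c a) (Poly_Mapping.single b 1) = 0"
  shows "bracket br (bracket br X Y) Z + bracket br (bracket br Y Z) X + bracket br (bracket br Z X) Y = 0"
proof -
  define J where "J X Y Z = bracket br (bracket br X Y) Z + bracket br (bracket br Y Z) X + bracket br (bracket br Z X) Y" for X Y Z
  have lin: "module_hom smult smult (\<lambda>X. J X Y Z)" "module_hom smult smult (\<lambda>Y. J X Y Z)"
    "module_hom smult smult (\<lambda>Z. J X Y Z)" for X Y Z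
    by (rule module_hom_smultI; simp add: J_def bracket_bilinear smult.scale_right_distrib ac_simps)+
  have "J (Poly_Mapping.single a 1) (Poly_Mapping.single b 1) Z = 0" for a b Z
    by (rule module_hom_eq_on_keys[OF lin(3) smult.module_hom_zero]) (simp add: J_def assms)
  then have "J (Poly_Mapping.single a 1) Y Z = 0" for a Y Z
    by (rule module_hom_eq_on_keys[OF lin(2) smult.module_hom_zero])
  then have "J X Y Z = 0"
    by (rule module_hom_eq_on_keys[OF lin(1) smult.module_hom_zero])
  then show ?thesis by (simp add: J_def)
qed

lemma commutator_in_env_ideal:
  "deg1 Z * deg1 W - deg1 W * deg1 Z - deg1 (bracket br Z W) \<in> env_ideal br"
proof -
  define F where "F Z W = deg1 Z * deg1 W - deg1 W * deg1 Z - deg1 (bracket br Z W)" for Z W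
  have lin: "module_hom smult smult (\<lambda>Z. F Z W)" "module_hom smult smult (F Z)" for Z W
    by (rule module_hom_smultI, simp add: F_def deg1_linear bracket_bilinear algebra_simps,
        simp add: F_def deg1_linear bracket_bilinear smult_times_left smult_times_right
          smult.scale_right_diff_distrib)+
  have "F (Poly_Mapping.single a 1) (Poly_Mapping.single b 1) = lie_rel br a b" for a b
    by (simp add: F_def lie_rel_eq)
  then have "F (Poly_Mapping.single a 1) (Poly_Mapping.single b 1) \<in> env_ideal br" for a b
    by (simp add: lie_rel_in_env_ideal)
  then have "F Z W \<in> smult.span (lie_ideal_gens br)"
    unfolding env_ideal_eq_span by (rule module_hom_in_span[OF lin(1), OF module_hom_in_span[OF lin(2)]])
  then show ?thesis by (simp add: F_def env_ideal_eq_span)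
qed

section \<open>The Virasoro algebra and its subalgebra O\<close>

lemma vir_br_L_L:
  "vir_br (L n) (L m) = Poly_Mapping.single (L (n + m)) (of_int (n - m))
     + Poly_Mapping.single C (if m = - n then of_int (n * (n\<^sup>2 - 1)) / 12 else (0::'k::field_char_0))"
  by (simp add: smult_single)

lemma vir_br_C_right [simp]: "vir_br a C = 0"
  by (cases a) simp_all

lemma lookup_vir_br_L_L:
  "Poly_Mapping.lookup (vir_br (L n) (L m)) x =
     (if x = L (n + m) then of_int (n - m) else 0)
     + (if x = C \<and> m = - n then of_int (n * (n\<^sup>2 - 1)) / 12 else (0::'k::field_char_0))"
  by (simp only: vir_br_L_L lookup_add lookup_single) (auto simp: when_def)

lemma vir_br_antisym: "vir_br b a = - (vir_br a b :: vir_basis \<Rightarrow>\<^sub>0 'k::field_char_0)"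
proof (cases a; cases b)
  fix n m assume ab: "a = L n" "b = L m"
  show ?thesis
  proof (rule poly_mapping_eqI)
    fix x
    show "Poly_Mapping.lookup (vir_br b a) x = Poly_Mapping.lookup (- vir_br a b :: _ \<Rightarrow>\<^sub>0 'k) x"
      unfolding ab lookup_vir_br_L_L lookup_uminus
      by (auto simp: add.commute of_int_diff power2_eq_square algebra_simps simp flip: add_divide_distrib)
  qed
qed simp_all

lemma vir_bracket_antisym: "bracket vir_br W Z = - bracket vir_br Z (W :: vir_basis \<Rightarrow>\<^sub>0 'k::field_char_0)"
  by (rule bracket_antisym) (rule vir_br_antisym)

lemma bracket_vir_br_L_L:
  "bracket vir_br (vir_br (L n) (L m)) (Poly_Mapping.single c 1)
     = smult (of_int (n - m)) (vir_br (L (n + m)) c :: _ \<Rightarrow>\<^sub>0 'k::field_char_0)"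
  unfolding bracket_single_right vir_br_L_L by (simp add: module_hom.add[OF module_hom_lin_ext])

lemma virasoro_cocycle:
  assumes "n + m + p = 0"
  shows "(n - m) * ((n + m) * ((n + m)\<^sup>2 - 1)) + (m - p) * ((m + p) * ((m + p)\<^sup>2 - 1))
     + (p - n) * ((p + n) * ((p + n)\<^sup>2 - 1)) = (0::int)"
proof -
  from assms have p: "p = - n - m" by simp
  show ?thesis unfolding p by (simp add: algebra_simps power2_eq_square)
qed

lemma vir_jacobi_L:
  "smult (of_int (n - m)) (vir_br (L (n + m)) (L p)) + smult (of_int (m - p)) (vir_br (L (m + p)) (L n))
     + smult (of_int (p - n)) (vir_br (L (p + n)) (L m)) = (0 :: _ \<Rightarrow>\<^sub>0 'k::field_char_0)"
proof (rule poly_mapping_eqI)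
  fix x
  have L_part: "of_int (n - m) * of_int (n + m - p) + of_int (m - p) * of_int (m + p - n)
      + of_int (p - n) * of_int (p + n - m) = (0::'k)"
    unfolding of_int_mult[symmetric] of_int_add[symmetric] by (simp add: algebra_simps)
  have C_part: "of_int (n - m) * (of_int ((n + m) * ((n + m)\<^sup>2 - 1)) / 12)
      + of_int (m - p) * (of_int ((m + p) * ((m + p)\<^sup>2 - 1)) / 12)
      + of_int (p - n) * (of_int ((p + n) * ((p + n)\<^sup>2 - 1)) / 12) = (0::'k)"
    if "n + m + p = 0"
    using arg_cong[OF virasoro_cocycle[OF that], of "\<lambda>k. of_int k / (12::'k)"]
    by (simp add: add_divide_distrib)
  have sums: "m + p + n = n + m + p" "p + n + m = n + m + p" "p = - (n + m) \<longleftrightarrow> n + m + p = 0"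
    "n = - (m + p) \<longleftrightarrow> n + m + p = 0" "m = - (p + n) \<longleftrightarrow> n + m + p = 0"
    by auto
  consider "x = L (n + m + p)" | "x = C" | "x \<noteq> L (n + m + p)" "x \<noteq> C"
    by blast
  then show "Poly_Mapping.lookup (smult (of_int (n - m)) (vir_br (L (n + m)) (L p))
      + smult (of_int (m - p)) (vir_br (L (m + p)) (L n)) + smult (of_int (p - n)) (vir_br (L (p + n)) (L m))) x
    = Poly_Mapping.lookup (0 :: _ \<Rightarrow>\<^sub>0 'k) x"
  proof cases
    case 1
    then show ?thesis
      using L_part by (simp add: lookup_add lookup_vir_br_L_L sums del: vir_br.simps)
  next
    case 2
    then show ?thesis
      using C_part by (cases "n + m + p = 0") (simp_all add: lookup_add lookup_vir_br_L_L sums del: vir_br.simps)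
  next
    case 3
    then show ?thesis
      by (simp add: lookup_add lookup_vir_br_L_L sums del: vir_br.simps)
  qed
qed

lemma vir_jacobi_single:
  "bracket vir_br (vir_br a b) (Poly_Mapping.single c 1) + bracket vir_br (vir_br b c) (Poly_Mapping.single a 1)
     + bracket vir_br (vir_br c a) (Poly_Mapping.single b 1) = (0 :: _ \<Rightarrow>\<^sub>0 'k::field_char_0)"
proof (cases "a = C \<or> b = C \<or> c = C")
  case True
  then show ?thesis by (auto simp: bracket_single_right)
next
  case False
  then obtain n m p where abc: "a = L n" "b = L m" "c = L p"
    by (metis vir_basis.exhaust)
  show ?thesis
    unfolding abc bracket_vir_br_L_L by (rule vir_jacobi_L)
qed

lemma vir_jacobi:
  "bracket vir_br (bracket vir_br X Y) Z + bracket vir_br (bracket vir_br Y Z) X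
     + bracket vir_br (bracket vir_br Z X) Y = (0::vir_basis \<Rightarrow>\<^sub>0 'k::field_char_0)"
  by (rule bracket_jacobi) (rule vir_jacobi_single)

lemma vir_jacobi_left:
  "bracket vir_br (bracket vir_br X Y) Z
     = bracket vir_br (bracket vir_br X Z) Y - bracket vir_br (bracket vir_br Y Z) (X :: vir_basis \<Rightarrow>\<^sub>0 'k::field_char_0)"
proof -
  have "bracket vir_br (bracket vir_br Z X) Y = - bracket vir_br (bracket vir_br X Z) Y"
    by (simp add: vir_bracket_antisym[of Z X] bracket_bilinear)
  then show ?thesis
    using vir_jacobi[of X Y Z] by (simp add: algebra_simps)
qed

lemma vir_jacobi_right:
  "bracket vir_br X (bracket vir_br Y Z)
     = bracket vir_br (bracket vir_br X Y) Z - bracket vir_br (bracket vir_br X Z) (Y :: vir_basis \<Rightarrow>\<^sub>0 'k::field_char_0)"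
proof -
  have "bracket vir_br (bracket vir_br Z X) Y = - bracket vir_br (bracket vir_br X Z) Y"
    by (simp add: vir_bracket_antisym[of Z X] bracket_bilinear)
  then show ?thesis
    using vir_jacobi[of X Y Z] vir_bracket_antisym[of X "bracket vir_br Y Z"] by (simp add: algebra_simps)
qed

definition o_embed :: "(nat \<Rightarrow>\<^sub>0 'k::field_char_0) \<Rightarrow> (vir_basis \<Rightarrow>\<^sub>0 'k)" where
  "o_embed = lin_ext o_vec"

lemma module_hom_o_embed: "module_hom smult smult o_embed"
  unfolding o_embed_def by (rule module_hom_lin_ext)

lemma o_embed_single [simp]: "o_embed (Poly_Mapping.single i 1) = o_vec i"
  by (simp add: o_embed_def)

lemma lookup_o_vec:
  "Poly_Mapping.lookup (o_vec i) x
     = (if x = L (int i + 1) then 1 else 0) - (if x = L (- (int i + 1)) then 1 else (0::'k::field_char_0))"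
  by (simp add: o_vec_def lookup_minus lookup_single when_def)

lemma bracket_o_vec_expand:
  "bracket vir_br (o_vec i) (o_vec j) =
    vir_br (L (int i + 1)) (L (int j + 1)) - vir_br (L (int i + 1)) (L (- (int j + 1)))
    - vir_br (L (- (int i + 1))) (L (int j + 1))
    + (vir_br (L (- (int i + 1))) (L (- (int j + 1))) :: _ \<Rightarrow>\<^sub>0 'k::field_char_0)"
  by (simp add: o_vec_def bracket_bilinear)

lemma o_embed_o_br:
  "o_embed (o_br i j) = smult (of_int (int i - int j)) (o_vec (i + j + 1))
     + (if j < i then smult (- of_int (int i + int j + 2)) (o_vec (i - j - 1))
        else if i < j then smult (of_int (int i + int j + 2)) (o_vec (j - i - 1))
        else (0 :: _ \<Rightarrow>\<^sub>0 'k::field_char_0))"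
  by (simp add: o_br_def module_hom.add[OF module_hom_o_embed] module_hom.scale[OF module_hom_o_embed]
      module_hom.zero[OF module_hom_o_embed])

lemma bracket_o_vec: "bracket vir_br (o_vec i) (o_vec j) = (o_embed (o_br i j) :: vir_basis \<Rightarrow>\<^sub>0 'k::field_char_0)"
proof (rule poly_mapping_eqI)
  fix x
  note simps = bracket_o_vec_expand o_embed_o_br lookup_add lookup_minus lookup_vir_br_L_L lookup_o_vec
    lookup_single when_def
  consider "i \<noteq> j" | "i = j" "x = C" | k where "i = j" "x = L k"
    by (cases x) auto
  then show "Poly_Mapping.lookup (bracket vir_br (o_vec i) (o_vec j)) x
      = Poly_Mapping.lookup (o_embed (o_br i j) :: _ \<Rightarrow>\<^sub>0 'k) x"
  proof cases
    case 1
    then show ?thesis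
      by (cases x; cases "i < j") (auto simp: simps of_nat_diff algebra_simps)
  next
    case 2
    have "(- int j - 1) * ((- int j - 1)\<^sup>2 - 1) = - ((int j + 1) * ((int j + 1)\<^sup>2 - 1))"
      by (simp add: power2_eq_square algebra_simps)
    with 2 show ?thesis
      by (simp add: simps del: of_int_mult of_int_diff of_int_add of_int_power)
  next
    case 3
    then show ?thesis
      by (auto simp: simps of_nat_diff algebra_simps)
  qed
qed

lemma bracket_o_embed:
  "bracket vir_br (o_embed Q) (o_embed P) = (o_embed (bracket o_br Q P) :: vir_basis \<Rightarrow>\<^sub>0 'k::field_char_0)"
proof (rule module_hom_eq_on_keys[where F = "\<lambda>Q. bracket vir_br (o_embed Q) (o_embed P)"])
  fix i
  show "bracket vir_br (o_embed (Poly_Mapping.single i 1)) (o_embed P)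
      = (o_embed (bracket o_br (Poly_Mapping.single i 1) P) :: _ \<Rightarrow>\<^sub>0 'k)"
    by (rule module_hom_eq_on_keys[where F = "\<lambda>P. bracket vir_br (o_embed (Poly_Mapping.single i 1)) (o_embed P)"])
      (simp_all add: bracket_o_vec module_hom_comp[OF module_hom_o_embed module_hom_bracket_right]
        module_hom_comp[OF module_hom_bracket_right module_hom_o_embed])
qed (simp_all add: module_hom_comp[OF module_hom_o_embed module_hom_bracket_left]
  module_hom_comp[OF module_hom_bracket_left module_hom_o_embed])

section \<open>The decomposition Vir = B \<oplus> O\<close>

(* L_{-n} = L_n - O_{n-1} for n > 0: b_part and o_index are the two parts of a basis vector
   with negative index. *)
fun is_neg :: "vir_basis \<Rightarrow> bool" where
  "is_neg (L n) = (n < 0)"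
| "is_neg C = False"

fun b_part :: "vir_basis \<Rightarrow> vir_basis" where
  "b_part (L n) = L \<bar>n\<bar>"
| "b_part C = C"

fun o_index :: "vir_basis \<Rightarrow> nat" where
  "o_index (L n) = nat (- n - 1)"
| "o_index C = 0"

lemma is_neg_b_part [simp]: "\<not> is_neg (b_part a)"
  by (cases a) auto

lemma b_part_nonneg [simp]: "\<not> is_neg a \<Longrightarrow> b_part a = a"
  by (cases a) auto

lemma single_eq_b_part_minus_o_vec:
  "Poly_Mapping.single a (1::'k::field_char_0)
     = Poly_Mapping.single (b_part a) 1 - (if is_neg a then o_vec (o_index a) else 0)"
proof (cases a)
  case (L n)
  then show ?thesis
    by (cases "n < 0") (auto simp: o_vec_def)
qed simp

definition in_borel :: "(vir_basis \<Rightarrow>\<^sub>0 'k::zero) \<Rightarrow> bool" where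
  "in_borel Z \<longleftrightarrow> (\<forall>a\<in>Poly_Mapping.keys Z. \<not> is_neg a)"

lemma in_borel_single: "\<not> is_neg a \<Longrightarrow> in_borel (Poly_Mapping.single a 1)"
  by (simp add: in_borel_def)

definition borel_proj :: "(vir_basis \<Rightarrow>\<^sub>0 'k::field_char_0) \<Rightarrow> (vir_basis \<Rightarrow>\<^sub>0 'k)" where
  "borel_proj = lin_ext (\<lambda>a. Poly_Mapping.single (b_part a) 1)"

definition o_proj :: "(vir_basis \<Rightarrow>\<^sub>0 'k::field_char_0) \<Rightarrow> (nat \<Rightarrow>\<^sub>0 'k)" where
  "o_proj = lin_ext (\<lambda>a. if is_neg a then Poly_Mapping.single (o_index a) 1 else 0)"

lemma vir_decomp:
  fixes Z :: "vir_basis \<Rightarrow>\<^sub>0 'k::field_char_0"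
  shows "Z = borel_proj Z - o_embed (o_proj Z)"
proof (rule module_hom_eq_on_keys[where F = "\<lambda>Z. Z"])
  show "module_hom smult smult (\<lambda>Z. borel_proj Z - o_embed (o_proj Z))"
    unfolding borel_proj_def o_proj_def
    by (rule smult.module_hom_sub[OF module_hom_lin_ext module_hom_comp[OF module_hom_lin_ext module_hom_o_embed]])
  fix a
  have "borel_proj (Poly_Mapping.single a 1) - o_embed (o_proj (Poly_Mapping.single a 1))
      = Poly_Mapping.single (b_part a) 1 - (if is_neg a then o_vec (o_index a) else (0 :: _ \<Rightarrow>\<^sub>0 'k))"
    by (simp add: borel_proj_def o_proj_def module_hom.zero[OF module_hom_o_embed])
  then show "Poly_Mapping.single a (1::'k) = borel_proj (Poly_Mapping.single a 1) - o_embed (o_proj (Poly_Mapping.single a 1))"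
    by (rule trans[OF single_eq_b_part_minus_o_vec sym])
qed (rule smult.module_hom_ident)

lemma in_borel_borel_proj: "in_borel (borel_proj Z)"
  unfolding in_borel_def borel_proj_def using keys_lin_ext by fastforce

lemma keys_vir_br_nonneg:
  assumes "\<not> is_neg a" "\<not> is_neg b" "x \<in> Poly_Mapping.keys (vir_br a b :: _ \<Rightarrow>\<^sub>0 'k::field_char_0)"
  shows "\<not> is_neg x"
proof (cases a; cases b)
  fix n m assume ab: "a = L n" "b = L m"
  with assms have "n \<ge> 0" "m \<ge> 0" "Poly_Mapping.lookup (vir_br a b :: _ \<Rightarrow>\<^sub>0 'k) x \<noteq> 0"
    by (auto simp: in_keys_iff)
  then show "\<not> is_neg x"
    unfolding ab lookup_vir_br_L_L by (cases x) (auto split: if_splits)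
qed (use assms in auto)

lemma in_borel_bracket:
  assumes "in_borel X" "in_borel Y"
  shows "in_borel (bracket vir_br X Y :: _ \<Rightarrow>\<^sub>0 'k::field_char_0)"
proof -
  have "Poly_Mapping.keys (bracket vir_br X Y :: _ \<Rightarrow>\<^sub>0 'k)
      \<subseteq> (\<Union>a\<in>Poly_Mapping.keys X. Poly_Mapping.keys (lin_ext (vir_br a) Y :: _ \<Rightarrow>\<^sub>0 'k))"
    unfolding bracket_def by (rule keys_lin_ext)
  also have "\<dots> \<subseteq> (\<Union>a\<in>Poly_Mapping.keys X. \<Union>b\<in>Poly_Mapping.keys Y.
      Poly_Mapping.keys (vir_br a b :: _ \<Rightarrow>\<^sub>0 'k))"
    by (rule UN_mono) (simp_all add: keys_lin_ext)
  finally show ?thesis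
    using assms keys_vir_br_nonneg unfolding in_borel_def by blast
qed

section \<open>The Verma ideal and the inclusion of T(O)\<close>

primrec o_word :: "nat list \<Rightarrow> (vir_basis list \<Rightarrow>\<^sub>0 'k::field_char_0)" where
  "o_word [] = 1"
| "o_word (i # m) = deg1 (o_vec i) * o_word m"

definition o_incl :: "(nat list \<Rightarrow>\<^sub>0 'k::field_char_0) \<Rightarrow> (vir_basis list \<Rightarrow>\<^sub>0 'k)" where
  "o_incl = lin_ext o_word"

lemma module_hom_o_incl: "module_hom smult smult o_incl"
  unfolding o_incl_def by (rule module_hom_lin_ext)

lemma o_incl_single [simp]: "o_incl (Poly_Mapping.single m a) = smult a (o_word m)"
  by (simp add: o_incl_def)

lemma o_word_append: "o_word (u @ v) = o_word u * (o_word v :: vir_basis list \<Rightarrow>\<^sub>0 'k::field_char_0)"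
  by (induction u) (simp_all add: mult.assoc)

lemma o_incl_times: "o_incl (x * y) = o_incl x * (o_incl y :: vir_basis list \<Rightarrow>\<^sub>0 'k::field_char_0)"
proof (rule module_hom_eq_on_keys[where F = "\<lambda>x. o_incl (x * y)"])
  fix u
  show "o_incl (Poly_Mapping.single u 1 * y) = o_incl (Poly_Mapping.single u 1) * (o_incl y :: _ \<Rightarrow>\<^sub>0 'k)"
    by (rule module_hom_eq_on_keys[where F = "\<lambda>y. o_incl (Poly_Mapping.single u 1 * y)"])
      (simp_all add: single_times_single o_word_append module_hom_comp[OF module_hom_times_left module_hom_o_incl]
        module_hom_comp[OF module_hom_o_incl module_hom_times_left])
qed (simp_all add: module_hom_comp[OF module_hom_times_right module_hom_o_incl]
  module_hom_comp[OF module_hom_o_incl module_hom_times_right])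

lemma o_incl_deg1: "o_incl (deg1 P) = deg1 (o_embed P :: vir_basis \<Rightarrow>\<^sub>0 'k::field_char_0)"
  by (rule module_hom_eq_on_keys[where F = "\<lambda>P. o_incl (deg1 P)"])
    (simp_all add: module_hom_comp[OF module_hom_deg1 module_hom_o_incl]
      module_hom_comp[OF module_hom_o_embed module_hom_deg1])

lemma o_incl_o_times:
  "o_incl (Poly_Mapping.single [i] 1 * x) = deg1 (o_vec i) * (o_incl x :: vir_basis list \<Rightarrow>\<^sub>0 'k::field_char_0)"
  by (simp add: o_incl_times)

lemma o_incl_env_ideal:
  assumes "x \<in> env_ideal o_br"
  shows "o_incl x \<in> env_ideal (vir_br :: _ \<Rightarrow> _ \<Rightarrow> _ \<Rightarrow>\<^sub>0 'k::field_char_0)"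
  using assms unfolding env_ideal_eq_span
proof (rule module_hom_span_subset[OF module_hom_o_incl, rotated])
  fix g :: "nat list \<Rightarrow>\<^sub>0 'k" assume "g \<in> lie_ideal_gens o_br"
  then obtain u w a b where g: "g = u * (lie_rel o_br a b :: nat list \<Rightarrow>\<^sub>0 'k) * w"
    unfolding lie_ideal_gens_def by (auto simp: tmul_eq_times)
  have "o_incl (lie_rel o_br a b) = deg1 (o_vec a) * deg1 (o_vec b) - deg1 (o_vec b) * deg1 (o_vec a)
      - deg1 (bracket vir_br (o_vec a) (o_vec b) :: vir_basis \<Rightarrow>\<^sub>0 'k)"
    by (simp add: lie_rel_eq module_hom.diff[OF module_hom_o_incl] o_incl_times o_incl_deg1 bracket_o_vec
        flip: deg1_single)
  then show "o_incl g \<in> smult.span (lie_ideal_gens vir_br)"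
    using env_ideal_times[OF commutator_in_env_ideal, of "o_incl u" "o_vec a" "o_vec b" vir_br "o_incl w"]
    by (simp add: g o_incl_times env_ideal_eq_span)
qed

definition verma_gens :: "'k::field_char_0 \<Rightarrow> 'k \<Rightarrow> (vir_basis list \<Rightarrow>\<^sub>0 'k) set" where
  "verma_gens h c = lie_ideal_gens vir_br
     \<union> {tmul u (Poly_Mapping.single [L n] 1) | u n. n > 0}
     \<union> {tmul u (Poly_Mapping.single [L 0] 1 - Poly_Mapping.single [] h) | u. True}
     \<union> {tmul u (Poly_Mapping.single [C] 1 - Poly_Mapping.single [] c) | u. True}"

lemma verma_ideal_eq_span: "verma_ideal h c = smult.span (verma_gens h c)"
  by (simp add: verma_ideal_def verma_gens_def lspan_eq_span)

lemma verma_gensE: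
  assumes "g \<in> verma_gens h c"
  obtains (lie) u w a b where "g = u * lie_rel vir_br a b * w"
    | (pos) u n where "g = u * Poly_Mapping.single [L n] 1" "n > 0"
    | (L0) u where "g = u * (Poly_Mapping.single [L 0] 1 - Poly_Mapping.single [] h)"
    | (C) u where "g = u * (Poly_Mapping.single [C] 1 - Poly_Mapping.single [] c)"
  using assms unfolding verma_gens_def lie_ideal_gens_def tmul_eq_times by blast

lemma verma_gens_times_left:
  assumes "g \<in> verma_gens h c"
  shows "p * g \<in> verma_gens h c"
  using assms
proof (cases rule: verma_gensE)
  case (lie u w a b)
  then have "p * g = (p * u) * lie_rel vir_br a b * w"
    by (simp add: mult.assoc)
  then show ?thesis unfolding verma_gens_def lie_ideal_gens_def tmul_eq_times by blast
next
  case (pos u n)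
  then have "p * g = (p * u) * Poly_Mapping.single [L n] 1"
    by (simp add: mult.assoc)
  then show ?thesis unfolding verma_gens_def tmul_eq_times using pos(2) by blast
next
  case (L0 u)
  then have "p * g = (p * u) * (Poly_Mapping.single [L 0] 1 - Poly_Mapping.single [] h)"
    by (simp add: mult.assoc)
  then show ?thesis unfolding verma_gens_def tmul_eq_times by blast
next
  case (C u)
  then have "p * g = (p * u) * (Poly_Mapping.single [C] 1 - Poly_Mapping.single [] c)"
    by (simp add: mult.assoc)
  then show ?thesis unfolding verma_gens_def tmul_eq_times by blast
qed

lemma verma_ideal_times_left: "x \<in> verma_ideal h c \<Longrightarrow> p * x \<in> verma_ideal h c"
  unfolding verma_ideal_eq_span
  by (erule module_hom_span_subset[OF module_hom_times_left, rotated])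
    (simp add: verma_gens_times_left smult.span_base)

lemma env_ideal_subset_verma_ideal: "env_ideal vir_br \<subseteq> verma_ideal h c"
  unfolding env_ideal_eq_span verma_ideal_eq_span verma_gens_def by (rule smult.span_mono) auto

lemma L_pos_in_verma_ideal:
  assumes "n > 0"
  shows "Poly_Mapping.single [L n] 1 \<in> verma_ideal h c"
proof -
  have "tmul 1 (Poly_Mapping.single [L n] 1) \<in> verma_gens h c"
    unfolding verma_gens_def using assms by blast
  then show ?thesis
    by (simp add: verma_ideal_eq_span tmul_eq_times smult.span_base)
qed

lemma L0_minus_h_in_verma_ideal:
  "Poly_Mapping.single [L 0] 1 - Poly_Mapping.single [] h \<in> verma_ideal h c"
proof -
  have "tmul 1 (Poly_Mapping.single [L 0] 1 - Poly_Mapping.single [] h) \<in> verma_gens h c"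
    unfolding verma_gens_def by blast
  then show ?thesis
    by (simp add: verma_ideal_eq_span tmul_eq_times smult.span_base)
qed

lemma C_minus_c_in_verma_ideal:
  "Poly_Mapping.single [C] 1 - Poly_Mapping.single [] c \<in> verma_ideal h c"
proof -
  have "tmul 1 (Poly_Mapping.single [C] 1 - Poly_Mapping.single [] c) \<in> verma_gens h c"
    unfolding verma_gens_def by blast
  then show ?thesis
    by (simp add: verma_ideal_eq_span tmul_eq_times smult.span_base)
qed

section \<open>The action of Vir on T(O)\<close>

context
  fixes h c :: "'k::field_char_0"
begin

(* The action that U(O) \<cong> V(h,c) should transport: O_i acts by left multiplication with
   the letter i, an element of B is commuted through a word letter by letter until it reaches
   the empty word, where it acts by its character borel_char on the highest weight vector. *)
fun borel_char :: "vir_basis \<Rightarrow> 'k" where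
  "borel_char (L n) = (if n = 0 then h else 0)"
| "borel_char C = c"

primrec act_word :: "nat list \<Rightarrow> vir_basis \<Rightarrow> (nat list \<Rightarrow>\<^sub>0 'k)" where
  "act_word [] a = smult (borel_char (b_part a)) 1
     - (if is_neg a then Poly_Mapping.single [o_index a] 1 else 0)"
| "act_word (i # m) a = Poly_Mapping.single [i] 1 * act_word m (b_part a)
     + lin_ext (act_word m) (bracket vir_br (Poly_Mapping.single (b_part a) 1) (o_vec i))
     - (if is_neg a then Poly_Mapping.single (o_index a # i # m) 1 else 0)"

definition act :: "(vir_basis \<Rightarrow>\<^sub>0 'k) \<Rightarrow> (nat list \<Rightarrow>\<^sub>0 'k) \<Rightarrow> (nat list \<Rightarrow>\<^sub>0 'k)" where
  "act Z y = lin_ext (\<lambda>a. lin_ext (\<lambda>m. act_word m a) y) Z"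

lemma module_hom_act_left: "module_hom smult smult (\<lambda>Z. act Z y)"
  unfolding act_def by (rule module_hom_lin_ext)

lemma module_hom_act: "module_hom smult smult (act Z)"
  unfolding act_def[abs_def] by (rule module_hom_lin_ext_fun) (rule module_hom_lin_ext)

lemmas act_linear =
  module_hom.add[OF module_hom_act_left] module_hom.add[OF module_hom_act]
  module_hom.diff[OF module_hom_act_left] module_hom.diff[OF module_hom_act]
  module_hom.neg[OF module_hom_act_left] module_hom.neg[OF module_hom_act]
  module_hom.scale[OF module_hom_act_left] module_hom.scale[OF module_hom_act]
  module_hom.zero[OF module_hom_act_left] module_hom.zero[OF module_hom_act]

lemma act_single_single [simp]: "act (Poly_Mapping.single a 1) (Poly_Mapping.single m 1) = act_word m a"
  by (simp add: act_def)

lemma act_single_right: "act W (Poly_Mapping.single m 1) = lin_ext (\<lambda>a. act_word m a) W"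
  by (simp add: act_def)

lemma act_single_neg:
  "act (Poly_Mapping.single a 1) y = act (Poly_Mapping.single (b_part a) 1) y
     - (if is_neg a then Poly_Mapping.single [o_index a] 1 * y else 0)"
proof (rule module_hom_eq_on_keys[where F = "act (Poly_Mapping.single a 1)"])
  show "module_hom smult smult (\<lambda>y. act (Poly_Mapping.single (b_part a) 1) y
      - (if is_neg a then Poly_Mapping.single [o_index a] 1 * y else 0))"
    by (cases "is_neg a")
      (simp_all add: smult.module_hom_sub[OF module_hom_act module_hom_times_left] module_hom_act)
  fix m
  show "act (Poly_Mapping.single a 1) (Poly_Mapping.single m 1) =
      act (Poly_Mapping.single (b_part a) 1) (Poly_Mapping.single m 1)
      - (if is_neg a then Poly_Mapping.single [o_index a] 1 * Poly_Mapping.single m 1 else 0)"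
    by (cases m) (simp_all add: single_times_single)
qed (rule module_hom_act)

lemma act_o_vec: "act (o_vec i) y = Poly_Mapping.single [i] 1 * y"
  using act_single_neg[of "L (- (int i + 1))" y]
  by (simp add: o_vec_def act_linear add.commute)

lemma act_o_embed: "act (o_embed P) y = deg1 P * y"
  by (rule module_hom_eq_on_keys[where F = "\<lambda>P. act (o_embed P) y"])
    (simp_all add: act_o_vec module_hom_comp[OF module_hom_o_embed module_hom_act_left]
      module_hom_comp[OF module_hom_deg1 module_hom_times_right])

lemma act_borel_times_o:
  assumes "in_borel Z"
  shows "act Z (Poly_Mapping.single [i] 1 * y)
    = Poly_Mapping.single [i] 1 * act Z y + act (bracket vir_br Z (o_vec i)) y"
proof (rule module_hom_eq_on_keys[where F = "\<lambda>Z. act Z (Poly_Mapping.single [i] 1 * y)"])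
  fix a assume "a \<in> Poly_Mapping.keys Z"
  then have a: "\<not> is_neg a"
    using assms by (simp add: in_borel_def)
  show "act (Poly_Mapping.single a 1) (Poly_Mapping.single [i] 1 * y) =
      Poly_Mapping.single [i] 1 * act (Poly_Mapping.single a 1) y
      + act (bracket vir_br (Poly_Mapping.single a 1) (o_vec i)) y"
  proof (rule module_hom_eq_on_keys[where F = "\<lambda>y. act (Poly_Mapping.single a 1) (Poly_Mapping.single [i] 1 * y)"])
    fix m
    show "act (Poly_Mapping.single a 1) (Poly_Mapping.single [i] 1 * Poly_Mapping.single m 1) =
        Poly_Mapping.single [i] 1 * act (Poly_Mapping.single a 1) (Poly_Mapping.single m 1)
        + act (bracket vir_br (Poly_Mapping.single a 1) (o_vec i)) (Poly_Mapping.single m 1)"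
      using a by (simp add: single_times_single act_single_right)
  qed (simp_all add: module_hom_comp[OF module_hom_times_left module_hom_act]
      smult.module_hom_add[OF module_hom_comp[OF module_hom_act module_hom_times_left] module_hom_act])
qed (simp_all add: module_hom_act_left smult.module_hom_add[OF module_hom_comp[OF module_hom_act_left module_hom_times_left]
      module_hom_comp[OF module_hom_bracket_left module_hom_act_left]])

lemma act_borel_times_deg1:
  assumes "in_borel Z"
  shows "act Z (deg1 P * y) = deg1 P * act Z y + act (bracket vir_br Z (o_embed P)) y"
  by (rule module_hom_eq_on_keys[where F = "\<lambda>P. act Z (deg1 P * y)"])
    (simp_all add: act_borel_times_o[OF assms]
      module_hom_comp[OF module_hom_comp[OF module_hom_deg1 module_hom_times_right] module_hom_act]
      smult.module_hom_add[OF module_hom_comp[OF module_hom_deg1 module_hom_times_right]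
        module_hom_comp[OF module_hom_comp[OF module_hom_o_embed module_hom_bracket_right] module_hom_act_left]])

lemma act_decomp: "act Z y = act (borel_proj Z) y - deg1 (o_proj Z) * y"
  using arg_cong[OF vir_decomp[of Z], of "\<lambda>Z. act Z y"] by (simp add: act_linear act_o_embed)

lemma act_borel_one: "\<not> is_neg a \<Longrightarrow> act (Poly_Mapping.single a 1) 1 = smult (borel_char a) 1"
  by (simp add: one_eq_single_Nil)

definition act_defect ::
    "(vir_basis \<Rightarrow>\<^sub>0 'k) \<Rightarrow> (vir_basis \<Rightarrow>\<^sub>0 'k) \<Rightarrow> (nat list \<Rightarrow>\<^sub>0 'k) \<Rightarrow> (nat list \<Rightarrow>\<^sub>0 'k)" where
  "act_defect X Y y = act X (act Y y) - act Y (act X y) - act (bracket vir_br X Y) y"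

lemma module_hom_act_defect_left: "module_hom smult smult (\<lambda>X. act_defect X Y y)"
  unfolding act_defect_def
  by (rule module_hom_smultI) (simp_all add: act_linear bracket_bilinear algebra_simps)

lemma module_hom_act_defect_right: "module_hom smult smult (\<lambda>Y. act_defect X Y y)"
  unfolding act_defect_def
  by (rule module_hom_smultI) (simp_all add: act_linear bracket_bilinear algebra_simps)

lemma module_hom_act_defect: "module_hom smult smult (act_defect X Y)"
  unfolding act_defect_def[abs_def]
  by (rule module_hom_smultI) (simp_all add: act_linear algebra_simps)

lemma act_defect_o_embed_left: "in_borel Y \<Longrightarrow> act_defect (o_embed Q) Y y = 0"
  unfolding act_defect_def act_o_embed
  by (simp add: act_borel_times_deg1 vir_bracket_antisym[of "o_embed Q" Y] act_linear)

lemma act_defect_borel_right_of_singles: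
  assumes singles: "\<And>a b. \<not> is_neg a \<Longrightarrow> \<not> is_neg b
      \<Longrightarrow> act_defect (Poly_Mapping.single a 1) (Poly_Mapping.single b 1) y = 0"
    and Y: "in_borel Y"
  shows "act_defect W Y y = 0"
proof -
  have "act_defect (Poly_Mapping.single a 1) Y y = 0" if "\<not> is_neg a" for a
    by (rule module_hom_eq_on_keys[OF module_hom_act_defect_right smult.module_hom_zero])
      (use Y in \<open>simp add: in_borel_def singles that\<close>)
  then have "act_defect (borel_proj W) Y y = 0"
    by (rule module_hom_eq_on_keys[OF module_hom_act_defect_left smult.module_hom_zero])
      (use in_borel_borel_proj[of W] in \<open>simp add: in_borel_def\<close>)
  moreover have "act_defect W Y y = act_defect (borel_proj W) Y y - act_defect (o_embed (o_proj W)) Y y"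
    by (subst vir_decomp[of W]) (rule module_hom.diff[OF module_hom_act_defect_left])
  ultimately show ?thesis
    by (simp add: act_defect_o_embed_left[OF Y])
qed

lemma act_vir_br_one:
  assumes "\<not> is_neg a" "\<not> is_neg b"
  shows "act (vir_br a b) 1 = 0"
proof (cases a; cases b)
  fix n m assume ab: "a = L n" "b = L m"
  with assms have nm: "n \<ge> 0" "m \<ge> 0" by auto
  show ?thesis
  proof (cases "n = 0 \<and> m = 0")
    case False
    with nm have "n + m \<noteq> 0" "m \<noteq> - n" by auto
    with ab nm show ?thesis
      by (simp add: one_eq_single_Nil act_single_right module_hom.add[OF module_hom_lin_ext]
          module_hom.scale[OF module_hom_lin_ext])
  qed (simp add: ab act_def)
qed (simp_all add: act_def)

lemma act_defect_antisym: "act_defect Y X y = - act_defect X Y y"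
  unfolding act_defect_def by (subst vir_bracket_antisym) (simp add: act_linear)

lemma act_defect_borel_o_times:
  assumes X: "in_borel X" and Y: "in_borel Y"
  shows "act_defect X Y (Poly_Mapping.single [i] 1 * y) = Poly_Mapping.single [i] 1 * act_defect X Y y
    + act_defect (bracket vir_br X (o_vec i)) Y y + act_defect X (bracket vir_br Y (o_vec i)) y"
proof -
  have jacobi: "bracket vir_br (bracket vir_br X Y) (o_vec i)
      = bracket vir_br (bracket vir_br X (o_vec i)) Y + bracket vir_br X (bracket vir_br Y (o_vec i))"
    using vir_jacobi_left[of X Y "o_vec i"] vir_bracket_antisym[of "bracket vir_br Y (o_vec i)" X] by simp
  show ?thesis
    by (simp add: act_defect_def act_borel_times_o[OF X] act_borel_times_o[OF Y]
        act_borel_times_o[OF in_borel_bracket[OF X Y]] jacobi act_linear algebra_simps)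
qed

lemma act_defect_borel_singles_word:
  assumes "\<not> is_neg a" "\<not> is_neg b"
  shows "act_defect (Poly_Mapping.single a 1) (Poly_Mapping.single b 1) (Poly_Mapping.single m 1) = 0"
  using assms
proof (induction m arbitrary: a b)
  case Nil
  then show ?case
    using act_vir_br_one[OF Nil]
    by (simp add: act_defect_def act_borel_one act_linear one_eq_single_Nil[symmetric] mult.commute)
next
  case (Cons i m)
  have IH: "act_defect (Poly_Mapping.single a' 1) (Poly_Mapping.single b' 1) (Poly_Mapping.single m 1) = 0"
    if "\<not> is_neg a'" "\<not> is_neg b'" for a' b'
    using Cons.IH[OF that] .
  have "Poly_Mapping.single (i # m) 1 = Poly_Mapping.single [i] 1 * Poly_Mapping.single m (1::'k)"
    by (simp add: single_times_single)
  then show ?case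
    using act_defect_borel_right_of_singles[OF IH in_borel_single, of b "bracket vir_br (Poly_Mapping.single a 1) (o_vec i)"]
      act_defect_borel_right_of_singles[OF IH in_borel_single, of a "bracket vir_br (Poly_Mapping.single b 1) (o_vec i)"]
    by (simp add: act_defect_borel_o_times[OF in_borel_single in_borel_single] Cons.prems IH
        act_defect_antisym[of _ "Poly_Mapping.single a 1"])
qed

lemma act_defect_borel_right: "in_borel Y \<Longrightarrow> act_defect W Y y = 0"
proof (rule act_defect_borel_right_of_singles)
  fix a b assume "\<not> is_neg a" "\<not> is_neg b"
  show "act_defect (Poly_Mapping.single a 1) (Poly_Mapping.single b 1) y = 0"
    by (rule module_hom_eq_on_keys[OF module_hom_act_defect smult.module_hom_zero])
      (simp add: act_defect_borel_singles_word \<open>\<not> is_neg a\<close> \<open>\<not> is_neg b\<close>)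
qed

lemma act_defect_o_embed_right_in_env_ideal: "act_defect W (o_embed P) y \<in> env_ideal o_br"
proof -
  have "act_defect W (o_embed P) y
      = act_defect (borel_proj W) (o_embed P) y - act_defect (o_embed (o_proj W)) (o_embed P) y"
    by (subst vir_decomp[of W]) (rule module_hom.diff[OF module_hom_act_defect_left])
  also have "act_defect (borel_proj W) (o_embed P) y = 0"
    by (simp add: act_defect_def act_o_embed act_borel_times_deg1[OF in_borel_borel_proj])
  also have "act_defect (o_embed Q) (o_embed P) y
      = (deg1 Q * deg1 P - deg1 P * deg1 Q - deg1 (bracket o_br Q P)) * y" for Q
    by (simp add: act_defect_def act_o_embed bracket_o_embed algebra_simps)
  finally show ?thesis
    using env_ideal_times[OF commutator_in_env_ideal, of 1 "o_proj W" P o_br y]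
    by (simp add: env_ideal_eq_span smult.span_neg)
qed

lemma act_defect_in_env_ideal: "act_defect X Y y \<in> env_ideal o_br"
proof -
  have "act_defect X Y y = act_defect X (borel_proj Y) y - act_defect X (o_embed (o_proj Y)) y"
    by (subst vir_decomp[of Y]) (rule module_hom.diff[OF module_hom_act_defect_right])
  then show ?thesis
    using act_defect_o_embed_right_in_env_ideal[of X "o_proj Y" y]
    by (simp add: act_defect_borel_right[OF in_borel_borel_proj] env_ideal_eq_span smult.span_neg)
qed

lemma act_in_env_ideal_of_singles:
  assumes singles: "\<And>a. \<not> is_neg a \<Longrightarrow> act (Poly_Mapping.single a 1) x \<in> env_ideal o_br"
    and x: "x \<in> env_ideal o_br"
  shows "act Z x \<in> env_ideal o_br"
proof -
  have "act (borel_proj Z) x \<in> env_ideal o_br"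
    unfolding env_ideal_eq_span
    by (rule module_hom_in_span[OF module_hom_act_left])
      (use singles in_borel_borel_proj[of Z] in \<open>auto simp: in_borel_def env_ideal_eq_span\<close>)
  moreover have "deg1 (o_proj Z) * x \<in> env_ideal o_br"
    by (rule env_ideal_times_left[OF x])
  ultimately show ?thesis
    by (simp add: act_decomp[of Z x] env_ideal_eq_span smult.span_diff)
qed

lemma act_borel_lie_rel_times:
  assumes X: "in_borel X"
  shows "act X (lie_rel o_br i j * w) = lie_rel o_br i j * act X w
    + act_defect (bracket vir_br X (o_vec i)) (o_vec j) w - act_defect (bracket vir_br X (o_vec j)) (o_vec i) w"
proof -
  define Oi where "Oi = Poly_Mapping.single [i] (1::'k)"
  define Oj where "Oj = Poly_Mapping.single [j] (1::'k)"
  define BXi where "BXi = bracket vir_br X (o_vec i)"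
  define BXj where "BXj = bracket vir_br X (o_vec j)"
  have r: "lie_rel o_br i j = Oi * Oj - Oj * Oi - deg1 (o_br i j)"
    by (simp add: lie_rel_eq Oi_def Oj_def)
  have X_Oi: "act X (Oi * y) = Oi * act X y + act BXi y" for y
    unfolding Oi_def BXi_def by (rule act_borel_times_o[OF X])
  have X_Oj: "act X (Oj * y) = Oj * act X y + act BXj y" for y
    unfolding Oj_def BXj_def by (rule act_borel_times_o[OF X])
  have jacobi: "bracket vir_br X (o_embed (o_br i j)) = bracket vir_br BXi (o_vec j) - bracket vir_br BXj (o_vec i)"
    unfolding bracket_o_vec[symmetric] BXi_def BXj_def by (rule vir_jacobi_right)
  have O_act: "act (o_vec i) y = Oi * y" "act (o_vec j) y = Oj * y" for y
    by (simp_all add: act_o_vec Oi_def Oj_def)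
  have "lie_rel o_br i j * w = Oi * (Oj * w) - Oj * (Oi * w) - deg1 (o_br i j) * w"
    by (simp add: r algebra_simps)
  then show ?thesis
    unfolding BXi_def[symmetric] BXj_def[symmetric] act_defect_def O_act
    by (simp add: act_linear X_Oi X_Oj act_borel_times_deg1[OF X] jacobi r algebra_simps)
qed

lemma act_lie_rel_times_in_env_ideal: "act Z (lie_rel o_br i j * w) \<in> env_ideal o_br"
proof (rule act_in_env_ideal_of_singles)
  fix a :: vir_basis assume "\<not> is_neg a"
  have "lie_rel o_br i j * act (Poly_Mapping.single a 1) w \<in> env_ideal o_br"
    using env_ideal_times[OF lie_rel_in_env_ideal[of o_br i j], of 1] by simp
  then show "act (Poly_Mapping.single a 1) (lie_rel o_br i j * w) \<in> env_ideal o_br"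
    using act_defect_o_embed_right_in_env_ideal[of _ "Poly_Mapping.single j 1" w]
      act_defect_o_embed_right_in_env_ideal[of _ "Poly_Mapping.single i 1" w]
    by (simp add: act_borel_lie_rel_times[OF in_borel_single[OF \<open>\<not> is_neg a\<close>]]
        env_ideal_eq_span smult.span_add smult.span_diff)
next
  show "lie_rel o_br i j * w \<in> env_ideal o_br"
    using env_ideal_times[OF lie_rel_in_env_ideal[of o_br i j], of 1 w] by simp
qed

lemma act_lie_rel_word_in_env_ideal:
  "act Z (Poly_Mapping.single u 1 * lie_rel o_br i j * w) \<in> env_ideal o_br"
proof (induction u arbitrary: Z)
  case Nil
  show ?case
    using act_lie_rel_times_in_env_ideal by (simp flip: one_eq_single_Nil)
next
  case (Cons k u)
  define x where "x = Poly_Mapping.single u 1 * (lie_rel o_br i j :: nat list \<Rightarrow>\<^sub>0 'k) * w"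
  have x: "x \<in> env_ideal o_br"
    unfolding x_def by (rule env_ideal_times[OF lie_rel_in_env_ideal])
  have "Poly_Mapping.single (k # u) 1 * lie_rel o_br i j * w = Poly_Mapping.single [k] 1 * x"
    by (simp add: x_def single_times_single flip: mult.assoc)
  moreover have "act (Poly_Mapping.single a 1) (Poly_Mapping.single [k] 1 * x) \<in> env_ideal o_br"
    if "\<not> is_neg a" for a
    unfolding act_borel_times_o[OF in_borel_single[OF that]]
    using Cons.IH[of "Poly_Mapping.single a 1"] Cons.IH[of "bracket vir_br (Poly_Mapping.single a 1) (o_vec k)"]
    by (simp add: x_def env_ideal_eq_span smult.span_add env_ideal_times_left[unfolded env_ideal_eq_span])
  ultimately show ?case
    by (simp add: act_in_env_ideal_of_singles env_ideal_times_left[OF x])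
qed

lemma act_env_ideal: "x \<in> env_ideal o_br \<Longrightarrow> act Z x \<in> env_ideal o_br"
  unfolding env_ideal_eq_span
proof (erule module_hom_span_subset[OF module_hom_act, rotated])
  fix g :: "nat list \<Rightarrow>\<^sub>0 'k" assume "g \<in> lie_ideal_gens o_br"
  then obtain u w a b where g: "g = u * (lie_rel o_br a b :: nat list \<Rightarrow>\<^sub>0 'k) * w"
    unfolding lie_ideal_gens_def by (auto simp: tmul_eq_times)
  have "act Z (u * lie_rel o_br a b * w) \<in> smult.span (lie_ideal_gens o_br)"
    by (rule module_hom_in_span[OF module_hom_comp[OF module_hom_comp[OF module_hom_times_right
          module_hom_times_right] module_hom_act]])
      (use act_lie_rel_word_in_env_ideal in \<open>simp add: env_ideal_eq_span\<close>)
  then show "act Z g \<in> smult.span (lie_ideal_gens o_br)"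
    by (simp add: g)
qed

primrec act_tensor_word :: "vir_basis list \<Rightarrow> (nat list \<Rightarrow>\<^sub>0 'k)" where
  "act_tensor_word [] = 1"
| "act_tensor_word (a # w) = act (Poly_Mapping.single a 1) (act_tensor_word w)"

definition act_tensor :: "(vir_basis list \<Rightarrow>\<^sub>0 'k) \<Rightarrow> (nat list \<Rightarrow>\<^sub>0 'k)" where
  "act_tensor = lin_ext act_tensor_word"

lemma module_hom_act_tensor: "module_hom smult smult act_tensor"
  unfolding act_tensor_def by (rule module_hom_lin_ext)

lemma act_tensor_single [simp]: "act_tensor (Poly_Mapping.single w 1) = act_tensor_word w"
  by (simp add: act_tensor_def)

lemma act_tensor_deg1_times: "act_tensor (deg1 Z * v) = act Z (act_tensor v)"
proof (rule module_hom_eq_on_keys[where F = "\<lambda>v. act_tensor (deg1 Z * v)"])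
  fix w
  show "act_tensor (deg1 Z * Poly_Mapping.single w 1) = act Z (act_tensor (Poly_Mapping.single w 1))"
    by (rule module_hom_eq_on_keys[where F = "\<lambda>Z. act_tensor (deg1 Z * Poly_Mapping.single w 1)"])
      (simp_all add: single_times_single module_hom_act_left
        module_hom_comp[OF module_hom_comp[OF module_hom_deg1 module_hom_times_right] module_hom_act_tensor])
qed (simp_all add: module_hom_comp[OF module_hom_times_left module_hom_act_tensor]
  module_hom_comp[OF module_hom_act_tensor module_hom_act])

lemma act_tensor_o_incl: "act_tensor (o_incl x) = x"
proof (rule module_hom_eq_on_keys[where F = "\<lambda>x. act_tensor (o_incl x)"])
  fix m
  show "act_tensor (o_incl (Poly_Mapping.single m 1)) = Poly_Mapping.single m 1"
  proof (induction m)
    case Nil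
    then show ?case by (simp add: one_eq_single_Nil)
  next
    case (Cons i m)
    then show ?case by (simp add: act_tensor_deg1_times act_o_vec single_times_single)
  qed
qed (simp_all add: module_hom_comp[OF module_hom_o_incl module_hom_act_tensor] smult.module_hom_ident)

lemma act_tensor_times_left:
  assumes y: "act_tensor y \<in> env_ideal o_br"
  shows "act_tensor (u * y) \<in> env_ideal o_br"
proof -
  have words: "act_tensor (Poly_Mapping.single v 1 * y) \<in> env_ideal o_br" for v
  proof (induction v)
    case Nil
    then show ?case using y by (simp flip: one_eq_single_Nil)
  next
    case (Cons a v)
    have "Poly_Mapping.single (a # v) 1 * y = deg1 (Poly_Mapping.single a 1) * (Poly_Mapping.single v 1 * y)"
      by (simp add: single_times_single flip: mult.assoc)
    then show ?case
      by (simp only: act_tensor_deg1_times) (rule act_env_ideal[OF Cons.IH])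
  qed
  show ?thesis
    unfolding env_ideal_eq_span
    by (rule module_hom_in_span[OF module_hom_comp[OF module_hom_times_right module_hom_act_tensor]])
      (use words in \<open>simp add: env_ideal_eq_span\<close>)
qed

lemma act_tensor_single_Nil: "act_tensor (Poly_Mapping.single [] a) = smult a 1"
  using module_hom.scale[OF module_hom_act_tensor, of a "Poly_Mapping.single [] 1"]
  by (simp add: smult_single)

lemma act_tensor_lie_rel_times:
  "act_tensor (lie_rel vir_br a b * w)
     = act_defect (Poly_Mapping.single a 1) (Poly_Mapping.single b 1) (act_tensor w)"
proof -
  have "lie_rel vir_br a b * w = deg1 (Poly_Mapping.single a 1) * (deg1 (Poly_Mapping.single b 1) * w)
      - deg1 (Poly_Mapping.single b 1) * (deg1 (Poly_Mapping.single a 1) * w) - deg1 (vir_br a b) * w"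
    by (simp add: lie_rel_eq algebra_simps)
  then show ?thesis
    by (simp only: module_hom.diff[OF module_hom_act_tensor] act_tensor_deg1_times) (simp add: act_defect_def)
qed

lemma act_tensor_verma_gens:
  assumes "g \<in> verma_gens h c"
  shows "act_tensor g \<in> env_ideal o_br"
  using assms
proof (cases rule: verma_gensE)
  case (lie u w a b)
  then show ?thesis
    using act_tensor_times_left[of "lie_rel vir_br a b * w" u] act_defect_in_env_ideal
    by (simp add: act_tensor_lie_rel_times mult.assoc)
next
  case (pos u n)
  then show ?thesis
    using act_tensor_times_left[of "Poly_Mapping.single [L n] 1" u]
    by (simp add: act_borel_one env_ideal_eq_span smult.span_zero)
next
  case (L0 u)
  then show ?thesis
    using act_tensor_times_left[of "Poly_Mapping.single [L 0] 1 - Poly_Mapping.single [] h" u]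
    by (simp add: act_borel_one act_tensor_single_Nil module_hom.diff[OF module_hom_act_tensor]
        env_ideal_eq_span smult.span_zero)
next
  case (C u)
  then show ?thesis
    using act_tensor_times_left[of "Poly_Mapping.single [C] 1 - Poly_Mapping.single [] c" u]
    by (simp add: act_borel_one act_tensor_single_Nil module_hom.diff[OF module_hom_act_tensor]
        env_ideal_eq_span smult.span_zero)
qed

lemma act_tensor_verma_ideal: "x \<in> verma_ideal h c \<Longrightarrow> act_tensor x \<in> env_ideal o_br"
  unfolding verma_ideal_eq_span env_ideal_eq_span
  by (erule module_hom_span_subset[OF module_hom_act_tensor, rotated])
    (simp add: act_tensor_verma_gens[unfolded env_ideal_eq_span])

definition incl_defect :: "(vir_basis \<Rightarrow>\<^sub>0 'k) \<Rightarrow> (nat list \<Rightarrow>\<^sub>0 'k) \<Rightarrow> (vir_basis list \<Rightarrow>\<^sub>0 'k)" where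
  "incl_defect Z y = deg1 Z * o_incl y - o_incl (act Z y)"

lemma module_hom_incl_defect_left: "module_hom smult smult (\<lambda>Z. incl_defect Z y)"
  unfolding incl_defect_def
  by (rule smult.module_hom_sub[OF module_hom_comp[OF module_hom_deg1 module_hom_times_right]
        module_hom_comp[OF module_hom_act_left module_hom_o_incl]])

lemma module_hom_incl_defect: "module_hom smult smult (incl_defect Z)"
  unfolding incl_defect_def[abs_def]
  by (rule smult.module_hom_sub[OF module_hom_comp[OF module_hom_o_incl module_hom_times_left]
        module_hom_comp[OF module_hom_act module_hom_o_incl]])

lemma incl_defect_o_embed: "incl_defect (o_embed Q) y = 0"
  by (simp add: incl_defect_def act_o_embed o_incl_times o_incl_deg1)

lemma incl_defect_in_verma_ideal_of_nonneg:
  assumes "\<And>a. \<not> is_neg a \<Longrightarrow> incl_defect (Poly_Mapping.single a 1) y \<in> verma_ideal h c"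
  shows "incl_defect Z y \<in> verma_ideal h c"
proof -
  have "incl_defect Z y = incl_defect (borel_proj Z) y - incl_defect (o_embed (o_proj Z)) y"
    by (subst vir_decomp[of Z]) (rule module_hom.diff[OF module_hom_incl_defect_left])
  also have "\<dots> = incl_defect (borel_proj Z) y"
    by (simp add: incl_defect_o_embed)
  also have "\<dots> \<in> verma_ideal h c"
    unfolding verma_ideal_eq_span
    by (rule module_hom_in_span[OF module_hom_incl_defect_left])
      (use assms in_borel_borel_proj[of Z] in \<open>simp add: in_borel_def verma_ideal_eq_span\<close>)
  finally show ?thesis .
qed

lemma incl_defect_one_in_verma_ideal:
  assumes "\<not> is_neg a"
  shows "incl_defect (Poly_Mapping.single a 1) 1 \<in> verma_ideal h c"
proof -
  have "incl_defect (Poly_Mapping.single a 1) 1 = Poly_Mapping.single [a] 1 - Poly_Mapping.single [] (borel_char a)"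
    using assms by (simp add: incl_defect_def act_borel_one module_hom.scale[OF module_hom_o_incl]
        smult_single one_eq_single_Nil single_times_single)
  also have "\<dots> \<in> verma_ideal h c"
    using assms L_pos_in_verma_ideal[where h = h and c = c] L0_minus_h_in_verma_ideal[where h = h and c = c]
      C_minus_c_in_verma_ideal[where h = h and c = c]
    by (cases a) (auto simp: verma_ideal_eq_span smult.span_zero)
  finally show ?thesis .
qed

lemma incl_defect_borel_o_times:
  assumes "in_borel A"
  shows "incl_defect A (Poly_Mapping.single [i] 1 * y)
    = (deg1 A * deg1 (o_vec i) - deg1 (o_vec i) * deg1 A - deg1 (bracket vir_br A (o_vec i))) * o_incl y
      + deg1 (o_vec i) * incl_defect A y + incl_defect (bracket vir_br A (o_vec i)) y"
  unfolding incl_defect_def act_borel_times_o[OF assms]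
  by (simp add: module_hom.add[OF module_hom_o_incl] o_incl_o_times algebra_simps)

lemma incl_defect_single_word_in_verma_ideal:
  "incl_defect (Poly_Mapping.single a 1) (Poly_Mapping.single m 1) \<in> verma_ideal h c"
proof (induction m arbitrary: a)
  case Nil
  show ?case
    by (rule incl_defect_in_verma_ideal_of_nonneg)
      (simp add: incl_defect_one_in_verma_ideal flip: one_eq_single_Nil)
next
  case (Cons i m)
  show ?case
  proof (rule incl_defect_in_verma_ideal_of_nonneg)
    fix a assume "\<not> is_neg a"
    define W where "W = bracket vir_br (Poly_Mapping.single a (1::'k)) (o_vec i)"
    have "incl_defect W (Poly_Mapping.single m 1) \<in> verma_ideal h c"
      unfolding verma_ideal_eq_span
      by (rule module_hom_in_span[OF module_hom_incl_defect_left])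
        (use Cons.IH in \<open>simp add: verma_ideal_eq_span\<close>)
    moreover have "(deg1 (Poly_Mapping.single a 1) * deg1 (o_vec i) - deg1 (o_vec i) * deg1 (Poly_Mapping.single a 1)
        - deg1 W) * o_incl (Poly_Mapping.single m 1) \<in> verma_ideal h c"
      using env_ideal_times[OF commutator_in_env_ideal, of 1 "Poly_Mapping.single a 1" "o_vec i" vir_br
          "o_incl (Poly_Mapping.single m 1)"] env_ideal_subset_verma_ideal
      by (auto simp: W_def)
    moreover have "Poly_Mapping.single (i # m) 1 = Poly_Mapping.single [i] 1 * Poly_Mapping.single m (1::'k)"
      by (simp add: single_times_single)
    ultimately show "incl_defect (Poly_Mapping.single a 1) (Poly_Mapping.single (i # m) 1) \<in> verma_ideal h c"
      using verma_ideal_times_left[OF Cons.IH[of a], of "deg1 (o_vec i)"]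
      by (simp add: W_def incl_defect_borel_o_times[OF in_borel_single[OF \<open>\<not> is_neg a\<close>]]
          verma_ideal_eq_span smult.span_add)
  qed
qed

lemma incl_defect_in_verma_ideal: "incl_defect Z y \<in> verma_ideal h c"
  unfolding verma_ideal_eq_span
proof (rule module_hom_in_span[OF module_hom_incl_defect_left])
  fix a
  show "incl_defect (Poly_Mapping.single a 1) y \<in> smult.span (verma_gens h c)"
    by (rule module_hom_in_span[OF module_hom_incl_defect])
      (use incl_defect_single_word_in_verma_ideal in \<open>simp add: verma_ideal_eq_span\<close>)
qed

lemma o_incl_act_tensor: "o_incl (act_tensor v) - v \<in> verma_ideal h c"
proof -
  have words: "o_incl (act_tensor (Poly_Mapping.single w 1)) - Poly_Mapping.single w 1 \<in> verma_ideal h c" for w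
  proof (induction w)
    case Nil
    then show ?case by (simp add: verma_ideal_eq_span smult.span_zero one_eq_single_Nil)
  next
    case (Cons a w)
    define y where "y = act_tensor_word w"
    have "o_incl (act_tensor (Poly_Mapping.single (a # w) 1)) - Poly_Mapping.single (a # w) 1
        = deg1 (Poly_Mapping.single a 1) * (o_incl y - Poly_Mapping.single w 1)
          - incl_defect (Poly_Mapping.single a 1) y"
      by (simp add: y_def incl_defect_def single_times_single algebra_simps)
    then show ?case
      using verma_ideal_times_left[OF Cons.IH, of "deg1 (Poly_Mapping.single a 1)"]
        incl_defect_in_verma_ideal[of "Poly_Mapping.single a 1" y]
      by (simp add: y_def verma_ideal_eq_span smult.span_diff)
  qed
  show ?thesis
    unfolding verma_ideal_eq_span
    by (rule module_hom_in_span[OF smult.module_hom_sub[OF module_hom_comp[OF module_hom_act_tensor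
          module_hom_o_incl] smult.module_hom_ident]])
      (use words in \<open>simp add: verma_ideal_eq_span\<close>)
qed

end

theorem proposition3p3:
  fixes h c :: "'k::field_char_0"
  shows "\<exists>\<Phi> :: (nat list \<Rightarrow>\<^sub>0 'k) \<Rightarrow> (vir_basis list \<Rightarrow>\<^sub>0 'k).
           (\<forall>x y. \<Phi> (x + y) = \<Phi> x + \<Phi> y)
         \<and> (\<forall>a x. \<Phi> (smult a x) = smult a (\<Phi> x))
         \<and> (\<forall>i x. \<Phi> (tmul (Poly_Mapping.single [i] 1) x) - tmul (deg1 (o_vec i)) (\<Phi> x)
                    \<in> verma_ideal h c)
         \<and> (\<forall>x. \<Phi> x \<in> verma_ideal h c \<longleftrightarrow> x \<in> env_ideal o_br)
         \<and> (\<forall>v. \<exists>x. \<Phi> x - v \<in> verma_ideal h c)"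
proof (intro exI[of _ o_incl] conjI allI iffI)
  show "o_incl (x + y) = o_incl x + o_incl y" for x y :: "nat list \<Rightarrow>\<^sub>0 'k"
    by (rule module_hom.add[OF module_hom_o_incl])
  show "o_incl (smult a x) = smult a (o_incl x)" for a and x :: "nat list \<Rightarrow>\<^sub>0 'k"
    by (rule module_hom.scale[OF module_hom_o_incl])
  show "o_incl (tmul (Poly_Mapping.single [i] 1) x) - tmul (deg1 (o_vec i)) (o_incl x) \<in> verma_ideal h c"
    for i and x :: "nat list \<Rightarrow>\<^sub>0 'k"
    by (simp add: tmul_eq_times o_incl_o_times verma_ideal_eq_span smult.span_zero)
  show "x \<in> env_ideal o_br" if "o_incl x \<in> verma_ideal h c" for x :: "nat list \<Rightarrow>\<^sub>0 'k"
    using act_tensor_verma_ideal[OF that] by (simp add: act_tensor_o_incl)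
  show "o_incl x \<in> verma_ideal h c" if "x \<in> env_ideal o_br" for x :: "nat list \<Rightarrow>\<^sub>0 'k"
    using o_incl_env_ideal[OF that] env_ideal_subset_verma_ideal by blast
  show "\<exists>x. o_incl x - v \<in> verma_ideal h c" for v
    using o_incl_act_tensor by blast
qed

end
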